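(* Let $(\mathcal{X},\rho)$ be a length space and $\eta:\mathcal{X}\to\mathcal{Y}$ a function. Then for every $x\in\mathcal{X}$, $\mathrm{margin}_\eta(x)=\rho(x,\partial_\eta\mathcal{X})$.
   Context: A length space: $\rho(x,x')=\inf_\gamma\ell(\gamma)$ over continuous paths $\gamma:[0,1]\to\mathcal{X}$ from $x$ to $x'$, $\ell(\gamma)$ denoting path length. $\mathrm{margin}_\eta(x)=\inf\{\rho(x,x'):\eta(x')\ne\eta(x)\}$, $\partial_\eta\mathcal{X}=\{x:\mathrm{margin}_\eta(x)=0\}$, and $\rho(x,Z)=\inf_{z\in Z}\rho(x,z)$. *)

theory Defs
  imports "HOL-Analysis.Analysis"
begin

definition path_length :: "(real \<Rightarrow> 'a::metric_space) \<Rightarrow> ereal" where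
  "path_length \<gamma> =
     (SUP p \<in> {(n, t). (t::nat \<Rightarrow> real) 0 = 0 \<and> t n = 1 \<and> (\<forall>i<n. t i \<le> t (Suc i))}.
        ereal (\<Sum>i<fst p. dist (\<gamma> (snd p i)) (\<gamma> (snd p (Suc i)))))"

definition length_space :: "'a::metric_space itself \<Rightarrow> bool" where
  "length_space _ \<longleftrightarrow>
     (\<forall>x x' :: 'a. ereal (dist x x') =
        (INF \<gamma> \<in> {\<gamma>. path \<gamma> \<and> pathstart \<gamma> = x \<and> pathfinish \<gamma> = x'}. path_length \<gamma>))"

definition margin :: "('a::metric_space \<Rightarrow> 'b) \<Rightarrow> 'a \<Rightarrow> ereal" where
  "margin \<eta> x = (INF x' \<in> {x'. \<eta> x' \<noteq> \<eta> x}. ereal (dist x x'))"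

definition decision_boundary :: "('a::metric_space \<Rightarrow> 'b) \<Rightarrow> 'a set" where
  "decision_boundary \<eta> = {x. margin \<eta> x = 0}"

definition dist_to_set :: "'a::metric_space \<Rightarrow> 'a set \<Rightarrow> ereal" where
  "dist_to_set x Z = (INF z \<in> Z. ereal (dist x z))"

end

theory Submission
  imports Defs
begin

text \<open>The inequality \<open>margin \<le> distance to the boundary\<close> holds in every metric space: near a
  boundary point there are points of another label. For the converse, take an almost shortest path
  from \<open>x\<close> to a point \<open>x'\<close> of another label. Away from the boundary \<open>\<eta>\<close> is locally constant, so
  on the connected image of the path \<open>\<eta>\<close> can only change value at a boundary point \<open>z\<close>, and
  \<open>dist x z\<close> is at most the length of the path.\<close>

lemma margin_le_dist:
  assumes "\<eta> x' \<noteq> \<eta> x"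
  shows "margin \<eta> x \<le> ereal (dist x x')"
  unfolding margin_def using assms by (intro INF_lower) auto

lemma decision_boundary_approx:
  assumes "z \<in> decision_boundary \<eta>" "e > 0"
  obtains z' where "\<eta> z' \<noteq> \<eta> z" "dist z z' < e"
proof -
  have "(INF z' \<in> {z'. \<eta> z' \<noteq> \<eta> z}. ereal (dist z z')) < ereal e"
    using assms unfolding decision_boundary_def margin_def by simp
  then show ?thesis using that by (auto simp: INF_less_iff)
qed

lemma locally_constant_off_decision_boundary:
  assumes "z \<notin> decision_boundary \<eta>"
  obtains e where "e > 0" "\<And>z'. z' \<in> ball z e \<Longrightarrow> \<eta> z' = \<eta> z"
proof -
  have "0 \<le> margin \<eta> z"
    unfolding margin_def by (intro INF_greatest) auto
  with assms have "0 < margin \<eta> z"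
    by (simp add: decision_boundary_def order_less_le)
  then obtain e :: real where "0 < ereal e" "ereal e < margin \<eta> z"
    using ereal_dense2 by blast
  then have "0 < e" by simp
  show ?thesis
  proof (rule that[OF \<open>0 < e\<close>])
    fix z' assume "z' \<in> ball z e"
    then have "ereal (dist z z') < ereal e" by simp
    also have "\<dots> < margin \<eta> z" by fact
    finally have "\<not> margin \<eta> z \<le> ereal (dist z z')" by (simp add: not_le)
    then show "\<eta> z' = \<eta> z" using margin_le_dist by blast
  qed
qed

lemma connected_meets_decision_boundary:
  assumes "connected S" "x \<in> S" "y \<in> S" "\<eta> x \<noteq> \<eta> y"
  shows "S \<inter> decision_boundary \<eta> \<noteq> {}"
proof
  assume off: "S \<inter> decision_boundary \<eta> = {}"
  have "\<eta> y = \<eta> x"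
  proof (rule connected_induction_simple[OF \<open>connected S\<close> \<open>x \<in> S\<close> \<open>y \<in> S\<close>, of "\<lambda>z. \<eta> z = \<eta> x"])
    fix a assume "a \<in> S"
    with off obtain e where "e > 0" and const: "\<And>z. z \<in> ball a e \<Longrightarrow> \<eta> z = \<eta> a"
      using locally_constant_off_decision_boundary by blast
    show "\<exists>T. openin (top_of_set S) T \<and> a \<in> T \<and> (\<forall>u\<in>T. \<forall>v\<in>T. \<eta> u = \<eta> x \<longrightarrow> \<eta> v = \<eta> x)"
    proof (intro exI conjI)
      show "openin (top_of_set S) (S \<inter> ball a e)"
        by (simp add: openin_open_Int)
      show "a \<in> S \<inter> ball a e"
        using \<open>a \<in> S\<close> \<open>e > 0\<close> by simp
      show "\<forall>u\<in>S \<inter> ball a e. \<forall>v\<in>S \<inter> ball a e. \<eta> u = \<eta> x \<longrightarrow> \<eta> v = \<eta> x"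
        using const by simp
    qed
  qed simp
  with \<open>\<eta> x \<noteq> \<eta> y\<close> show False by simp
qed

lemma dist_le_path_length:
  assumes "s \<in> {0..1}"
  shows "ereal (dist (\<gamma> 0) (\<gamma> s)) \<le> path_length \<gamma>"
proof -
  define t :: "nat \<Rightarrow> real" where "t = (\<lambda>i. if i = 0 then 0 else if i = 1 then s else 1)"
  have "(2, t) \<in> {(n, t). t 0 = 0 \<and> t n = 1 \<and> (\<forall>i<n. t i \<le> t (Suc i))}"
    using assms by (auto simp: t_def less_2_cases_iff)
  then have "ereal (\<Sum>i<2. dist (\<gamma> (t i)) (\<gamma> (t (Suc i)))) \<le> path_length \<gamma>"
    unfolding path_length_def by (rule SUP_upper2) simp
  moreover have "dist (\<gamma> 0) (\<gamma> s) \<le> (\<Sum>i<2. dist (\<gamma> (t i)) (\<gamma> (t (Suc i))))"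
    by (simp add: t_def numeral_2_eq_2)
  ultimately show ?thesis by (meson ereal_less_eq(3) order_trans)
qed

lemma margin_le_dist_to_decision_boundary:
  "margin \<eta> x \<le> dist_to_set x (decision_boundary \<eta>)"
  unfolding dist_to_set_def
proof (rule INF_greatest)
  fix z assume z: "z \<in> decision_boundary \<eta>"
  show "margin \<eta> x \<le> ereal (dist x z)"
  proof (rule ereal_le_epsilon2)
    fix e :: real assume "0 < e"
    with z obtain z' where z': "\<eta> z' \<noteq> \<eta> z" "dist z z' < e"
      by (rule decision_boundary_approx)
    obtain w where w: "\<eta> w \<noteq> \<eta> x" "dist x w \<le> dist x z + e"
    proof (cases "\<eta> z = \<eta> x")
      case True
      with z' show ?thesis
        using that[of z'] dist_triangle[of x z' z] by (simp add: dist_commute)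
    next
      case False
      with \<open>0 < e\<close> show ?thesis using that[of z] by simp
    qed
    have "margin \<eta> x \<le> ereal (dist x w)"
      using w(1) by (rule margin_le_dist)
    also have "\<dots> \<le> ereal (dist x z) + ereal e"
      using w(2) by simp
    finally show "margin \<eta> x \<le> ereal (dist x z) + ereal e" .
  qed
qed

lemma dist_to_decision_boundary_le_margin:
  assumes "length_space TYPE('a::metric_space)"
  shows "dist_to_set x (decision_boundary \<eta>) \<le> margin \<eta> (x::'a)"
  unfolding margin_def
proof (rule INF_greatest)
  fix x' assume "x' \<in> {x'. \<eta> x' \<noteq> \<eta> x}"
  then have "\<eta> x \<noteq> \<eta> x'" by simp
  show "dist_to_set x (decision_boundary \<eta>) \<le> ereal (dist x x')"
  proof (rule ereal_le_epsilon2)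
    fix e :: real assume "0 < e"
    have "(INF \<gamma> \<in> {\<gamma>. path \<gamma> \<and> pathstart \<gamma> = x \<and> pathfinish \<gamma> = x'}. path_length \<gamma>) = ereal (dist x x')"
      using assms unfolding length_space_def by simp
    also have "\<dots> < ereal (dist x x' + e)"
      using \<open>0 < e\<close> by simp
    finally
    obtain \<gamma> where \<gamma>: "path \<gamma>" "pathstart \<gamma> = x" "pathfinish \<gamma> = x'"
      and short: "path_length \<gamma> < ereal (dist x x' + e)"
      by (auto simp: INF_less_iff)
    have "path_image \<gamma> \<inter> decision_boundary \<eta> \<noteq> {}"
      using connected_meets_decision_boundary[OF connected_path_image[OF \<gamma>(1)]
          pathstart_in_path_image pathfinish_in_path_image] \<gamma>(2,3) \<open>\<eta> x \<noteq> \<eta> x'\<close>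
      by simp
    then obtain s where s: "s \<in> {0..1}" "\<gamma> s \<in> decision_boundary \<eta>"
      unfolding path_image_def by fastforce
    have "dist_to_set x (decision_boundary \<eta>) \<le> ereal (dist x (\<gamma> s))"
      unfolding dist_to_set_def using s(2) by (rule INF_lower)
    also have "\<dots> \<le> path_length \<gamma>"
      using dist_le_path_length[OF s(1), of \<gamma>] \<gamma>(2) by (simp add: pathstart_def)
    also have "\<dots> \<le> ereal (dist x x') + ereal e"
      using short by simp
    finally show "dist_to_set x (decision_boundary \<eta>) \<le> ereal (dist x x') + ereal e" .
  qed
qed

theorem lemma9:
  fixes \<eta> :: "'a::metric_space \<Rightarrow> 'b" and x :: 'a
  assumes "length_space TYPE('a)"
  shows "margin \<eta> x = dist_to_set x (decision_boundary \<eta>)"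
  using margin_le_dist_to_decision_boundary dist_to_decision_boundary_le_margin[OF assms]
  by (rule antisym)

end
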